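(* Let $n \ge 1$ and $A, B \in \mathrm{SPD}(n)$. Let $\Phi:\mathrm{SPD}(n)\to \mathbf{S}^\infty$ be the map defined in the context, and set $\widetilde f = \Phi(A)$, $\widetilde g = \Phi(B)$. Then $$ d(2A, 2B) = d_S(\widetilde f, \widetilde g), $$ where $d$ is the Stein metric on $\mathrm{SPD}(n)$ and $d_S$ is the function on $\mathbf{S}^\infty$ defined in the context. In other words, $A \mapsto \Phi(A/2)$ is an isometry from $(\mathrm{SPD}(n), d)$ onto its image in $(\mathbf{S}^\infty, d_S)$.
   Context: $\mathrm{SPD}(n)$ denotes the set of $n\times n$ real symmetric positive definite matrices. The Stein metric on $\mathrm{SPD}(n)$ is $$ d(A,B) = \sqrt{\log\det\!\Big(\tfrac{A+B}{2}\Big) - \tfrac12 \log\det(AB)}. $$ For $A \in \mathrm{SPD}(n)$, let $f_A:\mathbb{R}^n\to\mathbb{R}$ be the density of the Gaussian distribution with mean $\mathbf{0}$ and covariance matrix $A$, viewed as an element of $L^2(\mathbb{R}^n)$. Let $\mathbf{S}^\infty$ denote the unit sphere of $L^2(\mathbb{R}^n)$, and define $\Phi(A) = f_A/\|f_A\|_{L^2}$. For $\widetilde f, \widetilde g \in \mathbf{S}^\infty$ with $\langle \widetilde f, \widetilde g\rangle \neq 0$ define $$ d_S(\widetilde f, \widetilde g) = \sqrt{-\log \langle \widetilde f, \widetilde g\rangle^2}, $$ where $\langle\cdot,\cdot\rangle$ is the $L^2$ inner product. *)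

theory Defs
  imports "HOL-Analysis.Analysis"
begin

text \<open>Symmetric positive definite n x n real matrices; n is the cardinality of the
  finite index type 'n.\<close>
definition SPD :: "(real^'n^'n) set" where
  "SPD = {A. transpose A = A \<and> (\<forall>x::real^'n. x \<noteq> 0 \<longrightarrow> x \<bullet> (A *v x) > 0)}"

definition stein_dist :: "real^'n^'n \<Rightarrow> real^'n^'n \<Rightarrow> real" where
  "stein_dist A B = sqrt (ln (det ((1/2) *\<^sub>R (A + B))) - (1/2) * ln (det (A ** B)))"

definition gauss_density :: "real^'n^'n \<Rightarrow> real^'n \<Rightarrow> real" where
  "gauss_density A x =
     exp (- (x \<bullet> (matrix_inv A *v x)) / 2) / sqrt ((2 * pi) ^ CARD('n) * det A)"

definition L2_inner :: "(real^'n \<Rightarrow> real) \<Rightarrow> (real^'n \<Rightarrow> real) \<Rightarrow> real" where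
  "L2_inner f g = (\<integral>x. f x * g x \<partial>lborel)"

definition L2_norm :: "(real^'n \<Rightarrow> real) \<Rightarrow> real" where
  "L2_norm f = sqrt (L2_inner f f)"

definition Phi :: "real^'n^'n \<Rightarrow> (real^'n \<Rightarrow> real)" where
  "Phi A = (\<lambda>x. gauss_density A x / L2_norm (gauss_density A))"

definition d_S :: "(real^'n \<Rightarrow> real) \<Rightarrow> (real^'n \<Rightarrow> real) \<Rightarrow> real" where
  "d_S f g = sqrt (- ln ((L2_inner f g)\<^sup>2))"

end

theory Submission
  imports Defs "HOL-Probability.Distributions"
begin

(* The L2 inner product of two centred Gaussian densities is their convolution at the
   origin, <f_A, f_B> = f_{A+B}(0) = ((2 pi)^n det (A + B))^(-1/2).  To compute it, the
   quadratic form of A^-1 + B^-1 is reduced to x . x by a congruence P^T M P = I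
   (Gram-Schmidt), a linear change of variables turns the integral into a standard Gaussian
   one, and det A * det B * det (A^-1 + B^-1) = det (A + B).  Normalising gives
   <Phi A, Phi B>^2 = sqrt (det (2A) * det (2B)) / det (A + B), whose negative logarithm is
   the squared Stein distance between 2A and 2B. *)

section \<open>Linear changes of variables\<close>

lemma measure_shear_image_cbox:
  fixes a b :: "real^'n"
  assumes "m \<noteq> n"
  shows "measure lebesgue ((\<lambda>x. \<chi> i. if i = m then x$m + x$n else x$i) ` cbox a b)
       = measure lebesgue (cbox a b)"
proof (cases "cbox a b = {}")
  case False
  let ?f = "\<lambda>x::real^'n. \<chi> i. if i = m then x$m + x$n else x$i"
  have lin: "linear ?f"
    by (rule linearI) (auto simp: vec_eq_iff algebra_simps)
  \<comment> \<open>\<open>measure_shear_interval\<close> needs \<open>0 \<le> a$n\<close>, so the box is first moved to the origin.\<close>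
  have "cbox 0 (b - a) \<noteq> {}"
    using False by (simp add: box_ne_empty inner_diff_left)
  have "?f ` cbox a b = (+) (?f a) ` ?f ` cbox 0 (b - a)"
    using cbox_translation[of a 0 "b - a"] linear_add[OF lin, of a]
    by (simp add: image_image)
  then have "measure lebesgue (?f ` cbox a b) = measure lebesgue (?f ` cbox 0 (b - a))"
    by (simp add: measure_translation)
  also have "\<dots> = measure lebesgue (cbox 0 (b - a))"
    using measure_shear_interval[OF assms \<open>cbox 0 (b - a) \<noteq> {}\<close>] by simp
  also have "\<dots> = measure lebesgue (cbox a b)"
    using cbox_translation[of a 0 "b - a"] by (simp add: measure_translation)
  finally show ?thesis .
qed simp

lemma measure_permute_coordinates_cbox:
  fixes a b :: "real^'n"
  assumes p: "p permutes UNIV"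
  shows "measure lebesgue ((\<lambda>x. \<chi> i. x $ p i) ` cbox a b) = measure lebesgue (cbox a b)"
proof -
  have image: "(\<lambda>x. \<chi> i. x $ p i) ` cbox a b = cbox (\<chi> i. a $ p i) (\<chi> i. b $ p i)"
  proof (intro equalityI subsetI)
    fix x assume x: "x \<in> cbox (\<chi> i. a $ p i) (\<chi> i. b $ p i)"
    have "(\<chi> j. x $ inv p j) \<in> cbox a b"
      using x permutes_inverses[OF p] by (auto simp: mem_box_cart) (metis permutes_inverses(1)[OF p])+
    then show "x \<in> (\<lambda>x. \<chi> i. x $ p i) ` cbox a b"
      by (rule rev_image_eqI) (simp add: vec_eq_iff permutes_inverses[OF p])
  qed (auto simp: mem_box_cart)
  have "prod (\<lambda>i. b $ p i - a $ p i) UNIV = prod (\<lambda>i. b $ i - a $ i) UNIV"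
    using prod.permute[OF p, of "\<lambda>i. b $ i - a $ i"] by (simp add: comp_def)
  moreover have "cbox (\<chi> i. a $ p i) (\<chi> i. b $ p i) = {} \<longleftrightarrow> cbox a b = {}"
    unfolding image[symmetric] by simp
  ultimately show ?thesis
    unfolding image by (simp add: content_cbox_if_cart)
qed

lemma det_shear_matrix:
  assumes "m \<noteq> n"
  shows "det (matrix (\<lambda>x::real^'n. \<chi> i. if i = m then x$m + x$n else x$i)) = 1"
proof -
  have "matrix (\<lambda>x::real^'n. \<chi> i. if i = m then x$m + x$n else x$i)
      = (\<chi> k. if k = m then row m (mat 1) + 1 *s row n (mat 1) else row k (mat 1 :: real^'n^'n))"
    by (auto simp: matrix_def vec_eq_iff axis_def row_def mat_def)
  then show ?thesis
    using det_row_operation[OF assms, of "mat 1 :: real^'n^'n" 1] by (simp add: det_I)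
qed

lemma abs_det_permute_coordinates_matrix:
  assumes "p permutes (UNIV :: 'n::finite set)"
  shows "\<bar>det (matrix (\<lambda>x::real^'n. \<chi> i. x $ p i))\<bar> = 1"
proof -
  have "matrix (\<lambda>x::real^'n. \<chi> i. x $ p i) = (\<chi> i. mat 1 $ p i)"
    by (auto simp: matrix_def vec_eq_iff axis_def mat_def)
  then show ?thesis
    using det_permute_rows[OF assms, of "mat 1 :: real^'n^'n"] by (simp add: det_I flip: of_int_abs)
qed

text \<open>\<open>Change_Of_Vars\<close> proves \<open>measure_linear_image\<close> only for well-ordered index types.\<close>

proposition measure_linear_image_finite_index:
  fixes f :: "real^'n \<Rightarrow> real^'n"
  assumes "linear f" and "S \<in> lmeasurable"
  shows "f ` S \<in> lmeasurable \<and> measure lebesgue (f ` S) = \<bar>det (matrix f)\<bar> * measure lebesgue S"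
proof -
  let ?P = "\<lambda>f. \<forall>S \<in> lmeasurable. f ` S \<in> lmeasurable \<and>
               measure lebesgue (f ` S) = \<bar>det (matrix f)\<bar> * measure lebesgue S"
  have volume_preserving: "?P f"
    if "linear f" "\<bar>det (matrix f)\<bar> = 1"
      "\<And>a b. measure lebesgue (f ` cbox a b) = measure lebesgue (cbox a b)"
    for f :: "real^'n \<Rightarrow> real^'n"
  proof
    fix S :: "(real^'n) set"
    assume "S \<in> lmeasurable"
    from measure_linear_sufficient[OF \<open>linear f\<close> this, of 1] that
    show "f ` S \<in> lmeasurable \<and> measure lebesgue (f ` S) = \<bar>det (matrix f)\<bar> * measure lebesgue S"
      by simp
  qed
  have "?P f"
  proof (rule induct_linear_elementary[OF \<open>linear f\<close>])
    fix f g :: "real^'n \<Rightarrow> real^'n"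
    assume "linear f" "linear g" "?P f" "?P g"
    then show "?P (f \<circ> g)"
      unfolding image_comp[symmetric] by (simp add: matrix_compose det_mul abs_mult)
  next
    fix f :: "real^'n \<Rightarrow> real^'n" and i
    assume "linear f" "\<And>x. f x $ i = 0"
    then have "\<not> inj f"
      by (metis one_neq_zero linear_injective_imp_surjective surjE vec_component)
    then have "det (matrix f) = 0" "\<And>S. negligible (f ` S)"
      using \<open>linear f\<close> det_nz_iff_inj negligible_linear_singular_image by blast+
    then show "?P f"
      by (simp add: negligible_imp_measurable negligible_imp_measure0)
  next
    fix c :: "'n \<Rightarrow> real"
    show "?P (\<lambda>x. \<chi> i. c i * x $ i)"
      by (simp add: measurable_stretch measure_stretch matrix_def axis_def det_diagonal)
  next
    fix m n :: 'n
    show "?P (\<lambda>x. \<chi> i. x $ Transposition.transpose m n i)"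
      using permutes_swap_id[of m UNIV n]
      by (intro volume_preserving linearI)
         (simp_all add: vec_eq_iff abs_det_permute_coordinates_matrix measure_permute_coordinates_cbox)
  next
    fix m n :: 'n
    assume "m \<noteq> n"
    then show "?P (\<lambda>x. \<chi> i. if i = m then x $ m + x $ n else x $ i)"
      by (intro volume_preserving linearI)
         (simp_all add: vec_eq_iff algebra_simps det_shear_matrix measure_shear_image_cbox)
  qed
  with assms show ?thesis
    by blast
qed

lemma lborel_eq_density_distr_linear:
  fixes h :: "real^'n \<Rightarrow> real^'n"
  assumes "linear h" and "det (matrix h) \<noteq> 0"
  shows "lborel = density (distr lborel borel h) (\<lambda>_. ennreal \<bar>det (matrix h)\<bar>)"
proof (rule lborel_eqI)
  obtain g where g: "linear g" "\<And>x. g (h x) = x" "\<And>x. h (g x) = x"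
    using linear_injective_isomorphism[OF \<open>linear h\<close>] det_nz_iff_inj[OF \<open>linear h\<close>] assms(2)
    by metis
  have h_borel [measurable]: "h \<in> borel_measurable borel"
    using \<open>linear h\<close>
    by (intro borel_measurable_continuous_onI linear_continuous_on) (simp add: linear_conv_bounded_linear)
  have "matrix h ** matrix g = mat 1"
    using matrix_compose[OF g(1) \<open>linear h\<close>] g(3) by (simp add: comp_def matrix_id_mat_1[unfolded id_def])
  then have det_inverse: "\<bar>det (matrix h)\<bar> * \<bar>det (matrix g)\<bar> = 1"
    by (metis abs_1 abs_mult det_I det_mul)
  fix l u :: "real^'n"
  assume "\<And>b. b \<in> Basis \<Longrightarrow> l \<bullet> b \<le> u \<bullet> b"
  then have box_measure: "measure lborel (box l u) = (\<Prod>b\<in>Basis. (u - l) \<bullet> b)"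
    by (simp add: measure_lborel_box_eq)
  have preimage: "h -` box l u = g ` box l u"
    using g by (auto intro: rev_image_eqI)
  have "h -` box l u \<in> sets lborel"
    by (simp add: measurable_sets_borel[OF h_borel])
  then have "emeasure lborel (h -` box l u) = emeasure lebesgue (g ` box l u)"
    by (simp add: emeasure_completion preimage)
  also have "\<dots> = \<bar>det (matrix g)\<bar> * measure lborel (box l u)"
    using measure_linear_image_finite_index[OF g(1), of "box l u"] by (simp add: emeasure_eq_measure2)
  finally have "emeasure lborel (h -` box l u) = \<bar>det (matrix g)\<bar> * measure lborel (box l u)" .
  then show "emeasure (density (distr lborel borel h) (\<lambda>_. ennreal \<bar>det (matrix h)\<bar>)) (box l u)
      = (\<Prod>b\<in>Basis. (u - l) \<bullet> b)"
    using det_inverse box_measure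
    by (simp add: emeasure_density emeasure_distr nn_integral_cmult_indicator ennreal_mult'[symmetric]
        mult.assoc[symmetric])
qed simp

lemma has_bochner_integral_linear_comp:
  fixes h :: "real^'n \<Rightarrow> real^'n" and f :: "real^'n \<Rightarrow> real"
  assumes "linear h" and "det (matrix h) \<noteq> 0" and [measurable]: "f \<in> borel_measurable borel"
    and "has_bochner_integral lborel (\<lambda>x. f (h x)) I"
  shows "has_bochner_integral lborel f (\<bar>det (matrix h)\<bar> * I)"
proof -
  have [measurable]: "h \<in> borel_measurable borel"
    using \<open>linear h\<close>
    by (intro borel_measurable_continuous_onI linear_continuous_on) (simp add: linear_conv_bounded_linear)
  have "has_bochner_integral (density (distr lborel borel h) (\<lambda>_. \<bar>det (matrix h)\<bar>)) f (\<bar>det (matrix h)\<bar> * I)"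
    using assms(4) by (intro has_bochner_integral_density has_bochner_integral_distr) auto
  then show ?thesis
    by (simp flip: lborel_eq_density_distr_linear[OF assms(1,2)])
qed

section \<open>Symmetric positive definite matrices\<close>

lemma inner_matrix_vector_mult_transpose: "(A *v x) \<bullet> y = x \<bullet> (transpose A *v (y::real^'n))"
  by (metis dot_lmul_matrix vector_transpose_matrix)

lemma form_orthogonal_spanning_set:
  fixes M :: "real^'n^'n"
  assumes sym: "\<And>x y. x \<bullet> (M *v y) = y \<bullet> (M *v x)"
    and pos: "\<And>x. x \<noteq> 0 \<Longrightarrow> x \<bullet> (M *v x) > 0"
    and "finite T"
  shows "\<exists>U. finite U \<and> pairwise (\<lambda>x y. x \<bullet> (M *v y) = 0) U \<and> span U = span T"
  using \<open>finite T\<close>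
proof (induction T)
  case (insert a T)
  then obtain U where U: "finite U" "pairwise (\<lambda>x y. x \<bullet> (M *v y) = 0) U" "span U = span T"
    by blast
  define a' where "a' = a - (\<Sum>b\<in>U. ((b \<bullet> (M *v a)) / (b \<bullet> (M *v b))) *\<^sub>R b)"
  have "x \<bullet> (M *v a') = 0" if "x \<in> U" for x
  proof -
    have "(\<Sum>b\<in>U. (b \<bullet> (M *v a)) / (b \<bullet> (M *v b)) * (x \<bullet> (M *v b)))
        = (x \<bullet> (M *v a)) / (x \<bullet> (M *v x)) * (x \<bullet> (M *v x))"
      using U(1,2) that
      by (subst sum.mono_neutral_right[of U "{x}"]) (auto simp: pairwise_def)
    also have "\<dots> = x \<bullet> (M *v a)"
      using pos[of x] by (cases "x = 0") auto
    finally show ?thesis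
      by (simp add: a'_def matrix_vector_mult_diff_distrib vec.sum matrix_vector_mult_scaleR
          inner_diff_right inner_sum_right)
  qed
  then have "pairwise (\<lambda>x y. x \<bullet> (M *v y) = 0) (insert a' U)"
    using U(2) sym by (auto simp: pairwise_insert)
  moreover have "span (insert a' U) = span (insert a T)"
  proof -
    have "a' - a \<in> span U"
      by (simp add: a'_def span_neg span_sum span_base span_mul)
    then have "span (insert a' U) = span (insert a U)"
      by (rule eq_span_insert_eq)
    then show ?thesis
      using U(3) by (simp add: span_insert)
  qed
  ultimately show ?case
    using U(1) by blast
qed auto

lemma transpose_mult_mult_entry:
  "(transpose P ** M ** P) $ i $ j = column i P \<bullet> (M *v column j (P::real^'n^'n))"
proof -
  have "(transpose P ** M ** P) $ i $ j = (\<Sum>l\<in>UNIV. \<Sum>k\<in>UNIV. P $ k $ i * M $ k $ l * P $ l $ j)"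
    by (simp add: matrix_matrix_mult_def transpose_def sum_distrib_right)
  also have "\<dots> = (\<Sum>k\<in>UNIV. P $ k $ i * (\<Sum>l\<in>UNIV. M $ k $ l * P $ l $ j))"
    by (subst sum.swap) (simp add: sum_distrib_left mult.assoc)
  finally show ?thesis
    by (simp add: matrix_vector_mult_def inner_vec_def column_def)
qed

lemma SPD_congruent_mat_1:
  fixes M :: "real^'n^'n"
  assumes "M \<in> SPD"
  shows "\<exists>P::real^'n^'n. transpose P ** M ** P = mat 1"
proof -
  have pos: "\<And>x. x \<noteq> 0 \<Longrightarrow> x \<bullet> (M *v x) > 0" and sym: "\<And>x y. x \<bullet> (M *v y) = y \<bullet> (M *v x)"
    using assms inner_matrix_vector_mult_transpose[of M] by (auto simp: SPD_def inner_commute)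
  obtain U where U: "finite U" "pairwise (\<lambda>x y. x \<bullet> (M *v y) = 0) U" "span U = UNIV"
    using form_orthogonal_spanning_set[OF sym pos finite_Basis] by (auto simp: span_Basis)
  have "CARD('n) \<le> card (U - {0})"
    using span_card_ge_dim[of "U - {0}" UNIV] U(1,3) by (simp add: span_delete_0 dim_UNIV)
  then obtain w :: "'n \<Rightarrow> real^'n" where w: "range w \<subseteq> U - {0}" "inj w"
    using card_le_inj[of "UNIV :: 'n set" "U - {0}"] U(1) by auto
  define v where "v i = (1 / sqrt (w i \<bullet> (M *v w i))) *\<^sub>R w i" for i
  have v_orthonormal: "v i \<bullet> (M *v v j) = (if i = j then 1 else 0)" for i j
  proof (cases "i = j")
    case True
    have "w i \<bullet> (M *v w i) > 0"
      using w(1) pos[of "w i"] by blast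
    with True show ?thesis
      by (simp add: v_def matrix_vector_mult_scaleR)
  next
    case False
    then have "w i \<noteq> w j" "w i \<in> U" "w j \<in> U"
      using w by (auto simp: inj_eq)
    then have "w i \<bullet> (M *v w j) = 0"
      using U(2) by (simp add: pairwise_def)
    then show ?thesis
      using False by (simp add: v_def matrix_vector_mult_scaleR)
  qed
  define P :: "real^'n^'n" where "P = transpose (\<chi> i. v i)"
  have columns: "column i P = v i" for i
    by (simp add: P_def column_def transpose_def vec_eq_iff)
  have "transpose P ** M ** P = mat 1"
    by (simp add: vec_eq_iff mat_def transpose_mult_mult_entry columns v_orthonormal)
  then show ?thesis by blast
qed

lemma det_congruent_mat_1:
  fixes M P :: "real^'n^'n"
  assumes "transpose P ** M ** P = mat 1"
  shows "det M * (det P)\<^sup>2 = 1"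
  using assms by (metis det_I det_mul det_transpose mult.commute power2_eq_square mult.assoc)

lemma det_pos_SPD:
  fixes M :: "real^'n^'n"
  assumes "M \<in> SPD"
  shows "det M > 0"
proof -
  obtain P :: "real^'n^'n" where "transpose P ** M ** P = mat 1"
    using SPD_congruent_mat_1[OF assms] by blast
  then have "det M * (det P)\<^sup>2 = 1"
    by (rule det_congruent_mat_1)
  then show ?thesis
    by (smt (verit) mult_nonpos_nonneg zero_le_power2)
qed

lemma SPD_add:
  assumes "A \<in> SPD" and "B \<in> SPD"
  shows "A + B \<in> SPD"
proof -
  have "transpose (A + B) = transpose A + transpose B"
    by (simp add: transpose_def vec_eq_iff)
  with assms show ?thesis
    by (simp add: SPD_def matrix_vector_mult_add_rdistrib inner_add_right add_pos_pos)
qed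

lemma SPD_scaleR:
  assumes "c > 0" and "A \<in> SPD"
  shows "c *\<^sub>R A \<in> SPD"
  using assms by (auto simp: SPD_def transpose_def vec_eq_iff simp flip: scaleR_matrix_vector_assoc)

lemma
  fixes A :: "real^'n^'n"
  assumes "invertible A"
  shows matrix_inv_right: "A ** matrix_inv A = mat 1"
    and matrix_inv_left: "matrix_inv A ** A = mat 1"
proof -
  have "A ** matrix_inv A = mat 1 \<and> matrix_inv A ** A = mat 1"
    using assms unfolding invertible_def matrix_inv_def by (rule someI_ex)
  then show "A ** matrix_inv A = mat 1" "matrix_inv A ** A = mat 1"
    by auto
qed

lemma invertible_SPD:
  assumes "A \<in> SPD"
  shows "invertible A"
  using det_pos_SPD[OF assms] by (simp add: invertible_det_nz)

lemma matrix_inv_SPD: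
  fixes A :: "real^'n^'n"
  assumes "A \<in> SPD"
  shows "matrix_inv A \<in> SPD"
proof -
  let ?A' = "matrix_inv A"
  have right: "A ** ?A' = mat 1" and left: "?A' ** A = mat 1"
    using matrix_inv_right matrix_inv_left invertible_SPD[OF assms] by blast+
  have "transpose A = A" and pos: "\<And>x. x \<noteq> 0 \<Longrightarrow> x \<bullet> (A *v x) > 0"
    using assms by (auto simp: SPD_def)
  then have "transpose ?A' ** A = mat 1"
    using arg_cong[OF right, of transpose] by (simp add: matrix_transpose_mul)
  then have "transpose ?A' = ?A'"
    by (metis right matrix_mul_assoc matrix_mul_rid matrix_mul_lid)
  moreover have "x \<bullet> (?A' *v x) > 0" if "x \<noteq> 0" for x
  proof -
    have "A *v (?A' *v x) = x"
      using right by (simp add: matrix_vector_mul_assoc)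
    then show ?thesis
      using pos[of "?A' *v x"] that by (metis inner_commute matrix_vector_mult_0_right)
  qed
  ultimately show ?thesis
    by (simp add: SPD_def)
qed

lemma matrix_add_rdistrib: "((A::'a::semiring_1^'n^'m) + B) ** C = A ** C + B ** C"
  by (simp add: matrix_matrix_mult_def vec_eq_iff sum.distrib distrib_right)

lemma det_add_matrix_inv:
  fixes A B :: "real^'n^'n"
  assumes "invertible A" and "invertible B"
  shows "det A * det B * det (matrix_inv A + matrix_inv B) = det (A + B)"
proof -
  let ?A' = "matrix_inv A" and ?B' = "matrix_inv B"
  have "?A' ** (A + B) ** ?B' = (?A' ** A) ** ?B' + ?A' ** (B ** ?B')"
    by (simp add: matrix_add_ldistrib matrix_add_rdistrib matrix_mul_assoc)
  also have "\<dots> = ?B' + ?A'"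
    using matrix_inv_left[OF assms(1)] matrix_inv_right[OF assms(2)] by simp
  finally have "det (?A' + ?B') = det ?A' * det (A + B) * det ?B'"
    by (metis add.commute det_mul)
  then have "det A * det B * det (?A' + ?B') = (det ?A' * det A) * (det B * det ?B') * det (A + B)"
    by (simp add: mult_ac)
  moreover have "det ?A' * det A = 1" "det B * det ?B' = 1"
    using arg_cong[OF matrix_inv_left[OF assms(1)], of det] arg_cong[OF matrix_inv_right[OF assms(2)], of det]
    by (simp_all add: det_mul)
  ultimately show ?thesis
    by simp
qed

section \<open>Gaussian integrals\<close>

lemma nn_integral_exp_neg_square_half: "(\<integral>\<^sup>+t. exp (- t\<^sup>2 / 2) \<partial>lborel) = ennreal (sqrt (2 * pi))"
proof -
  have normal: "exp (- t\<^sup>2 / 2) = sqrt (2 * pi) * std_normal_density t" for t :: real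
    by (simp add: std_normal_density_def)
  show ?thesis
    unfolding normal by (subst nn_integral_eq_integral) auto
qed

lemma has_bochner_integral_exp_neg_inner_half:
  "has_bochner_integral lborel (\<lambda>x::real^'n. exp (- (x \<bullet> x) / 2)) (sqrt (2 * pi) ^ CARD('n))"
proof (rule has_bochner_integral_nn_integral)
  have "exp (- (x \<bullet> x) / 2) = (\<Prod>b\<in>Basis. exp (- (x \<bullet> b)\<^sup>2 / 2))" for x :: "real^'n"
    by (subst euclidean_inner)
       (simp add: exp_sum[symmetric] sum_negf sum_divide_distrib power2_eq_square)
  then have "(\<integral>\<^sup>+x. exp (- (x \<bullet> x) / 2) \<partial>(lborel :: (real^'n) measure))
      = (\<integral>\<^sup>+x. (\<Prod>b\<in>Basis. ennreal (exp (- (x \<bullet> b)\<^sup>2 / 2))) \<partial>(lborel :: (real^'n) measure))"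
    by (simp add: prod_ennreal)
  also have "\<dots> = (\<Prod>b\<in>(Basis :: (real^'n) set). ennreal (sqrt (2 * pi)))"
    by (subst nn_integral_lborel_prod) (simp_all add: nn_integral_exp_neg_square_half[simplified])
  finally show "(\<integral>\<^sup>+x. exp (- (x \<bullet> x) / 2) \<partial>(lborel :: (real^'n) measure))
      = ennreal (sqrt (2 * pi) ^ CARD('n))"
    by (simp add: ennreal_power)
qed auto

lemma has_bochner_integral_gaussian_SPD:
  fixes M :: "real^'n^'n"
  assumes "M \<in> SPD"
  shows "has_bochner_integral lborel (\<lambda>x. exp (- (x \<bullet> (M *v x)) / 2)) (sqrt ((2 * pi) ^ CARD('n) / det M))"
proof -
  define f where "f x = exp (- (x \<bullet> (M *v x)) / 2)" for x :: "real^'n"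
  obtain P :: "real^'n^'n" where P: "transpose P ** M ** P = mat 1"
    using SPD_congruent_mat_1[OF assms] by blast
  then have "det M * (det P)\<^sup>2 = 1"
    by (rule det_congruent_mat_1)
  then have "sqrt (det M) * \<bar>det P\<bar> = 1"
    by (metis real_sqrt_abs real_sqrt_mult real_sqrt_one)
  then have det_P: "\<bar>det (matrix ((*v) P))\<bar> = 1 / sqrt (det M)" "det (matrix ((*v) P)) \<noteq> 0"
    using det_pos_SPD[OF assms] by (auto simp: field_simps)
  have "(P *v x) \<bullet> (M *v (P *v x)) = x \<bullet> x" for x
    using P by (simp add: inner_matrix_vector_mult_transpose[of P] matrix_vector_mul_assoc matrix_mul_assoc
        flip: transpose_matrix_vector)
  then have "has_bochner_integral lborel (\<lambda>x. f (P *v x)) (sqrt (2 * pi) ^ CARD('n))"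
    using has_bochner_integral_exp_neg_inner_half by (simp add: f_def)
  moreover have "f \<in> borel_measurable borel"
    unfolding f_def
    by (intro borel_measurable_continuous_onI continuous_intros linear_continuous_on)
       (simp add: linear_conv_bounded_linear)
  ultimately have "has_bochner_integral lborel f (\<bar>det (matrix ((*v) P))\<bar> * sqrt (2 * pi) ^ CARD('n))"
    by (intro has_bochner_integral_linear_comp det_P) simp_all
  also have "\<bar>det (matrix ((*v) P))\<bar> * sqrt (2 * pi) ^ CARD('n) = sqrt ((2 * pi) ^ CARD('n) / det M)"
    using det_P by (simp add: real_sqrt_divide flip: real_sqrt_power)
  finally show ?thesis
    unfolding f_def .
qed

section \<open>Gaussian densities in \<open>L\<^sup>2\<close>\<close>

lemma L2_inner_gauss_density:
  fixes A B :: "real^'n^'n"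
  assumes "A \<in> SPD" and "B \<in> SPD"
  shows "L2_inner (gauss_density A) (gauss_density B) = gauss_density (A + B) 0"
proof -
  let ?c = "(2 * pi) ^ CARD('n)" and ?M = "matrix_inv A + matrix_inv B"
  have "?M \<in> SPD"
    using assms by (simp add: SPD_add matrix_inv_SPD)
  have "gauss_density A x * gauss_density B x
      = exp (- (x \<bullet> (?M *v x)) / 2) / (sqrt (?c * det A) * sqrt (?c * det B))" for x
    by (simp add: gauss_density_def matrix_vector_mult_add_rdistrib inner_add_right
        exp_add[symmetric] add_divide_distrib)
  then have "L2_inner (gauss_density A) (gauss_density B)
      = sqrt (?c / det ?M) / (sqrt (?c * det A) * sqrt (?c * det B))"
    using has_bochner_integral_gaussian_SPD[OF \<open>?M \<in> SPD\<close>]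
    by (simp add: L2_inner_def has_bochner_integral_iff)
  also have "\<dots> = 1 / sqrt (?c * det (A + B))"
  proof -
    have "det A > 0" "det B > 0" "det (A + B) > 0"
      using assms SPD_add det_pos_SPD by blast+
    moreover have "det A * det B * det ?M = det (A + B)"
      using det_add_matrix_inv invertible_SPD assms by blast
    moreover have "sqrt (c / m) / (sqrt (c * a) * sqrt (c * b)) = 1 / sqrt (c * d)"
      if "c > 0" "a > 0" "b > 0" "d > 0" "a * b * m = d" for c a b m d :: real
    proof -
      have "m > 0"
        using that by (metis mult_pos_pos zero_less_mult_pos)
      have "sqrt (c * a) * sqrt (c * b) = c * sqrt (a * b)"
        using that by (simp add: real_sqrt_mult)
      moreover have "sqrt (c * d) = sqrt c * sqrt (a * b) * sqrt m"
        using that by (simp flip: real_sqrt_mult)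
      ultimately show ?thesis
        using that \<open>m > 0\<close> by (simp add: real_sqrt_divide field_simps)
    qed
    ultimately show ?thesis
      by simp
  qed
  finally show ?thesis
    by (simp add: gauss_density_def)
qed

lemma L2_inner_divide: "L2_inner (\<lambda>x. f x / a) (\<lambda>x. g x / b) = L2_inner f g / (a * b)"
proof -
  have "(\<lambda>x. f x / a * (g x / b)) = (\<lambda>x. f x * g x / (a * b))"
    by simp
  then show ?thesis
    unfolding L2_inner_def by simp
qed

lemma L2_inner_Phi_squared:
  fixes A B :: "real^'n^'n"
  assumes "A \<in> SPD" and "B \<in> SPD"
  shows "(L2_inner (Phi A) (Phi B))\<^sup>2 = sqrt (det (2 *\<^sub>R A) * det (2 *\<^sub>R B)) / det (A + B)"
proof -
  let ?c = "(2 * pi) ^ CARD('n)"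
  have inner: "L2_inner (gauss_density X) (gauss_density Y) = 1 / sqrt (?c * det (X + Y))"
    if "X \<in> SPD" "Y \<in> SPD" for X Y :: "real^'n^'n"
    using L2_inner_gauss_density[OF that] by (simp add: gauss_density_def)
  have "((1 / sqrt (c * r)) / (sqrt (1 / sqrt (c * p)) * sqrt (1 / sqrt (c * q))))\<^sup>2 = sqrt (p * q) / r"
    if "c > 0" "p > 0" "q > 0" "r > 0" for c p q r :: real
  proof -
    have "(sqrt (1 / sqrt (c * p)) * sqrt (1 / sqrt (c * q)))\<^sup>2 = 1 / (c * sqrt (p * q))"
      using that by (simp add: power_mult_distrib real_sqrt_mult)
    then show ?thesis
      using that by (simp add: power_divide field_simps)
  qed
  moreover have "det (2 *\<^sub>R A) > 0" "det (2 *\<^sub>R B) > 0" "det (A + B) > 0"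
    using assms by (simp_all add: det_pos_SPD SPD_add SPD_scaleR)
  moreover have "L2_inner (gauss_density X) (gauss_density X) = 1 / sqrt (?c * det (2 *\<^sub>R X))"
    if "X \<in> SPD" for X :: "real^'n^'n"
    using inner[OF that that] by (simp only: scaleR_2)
  ultimately show ?thesis
    using assms by (simp add: Phi_def L2_inner_divide L2_norm_def inner)
qed

theorem proposition2:
  fixes A B :: "real^'n^'n"
  assumes "A \<in> SPD" and "B \<in> SPD"
  shows "stein_dist (2 *\<^sub>R A) (2 *\<^sub>R B) = d_S (Phi A) (Phi B)"
proof -
  define p where "p = det (2 *\<^sub>R A) * det (2 *\<^sub>R B)"
  have pos: "p > 0" "det (A + B) > 0"
    using assms by (simp_all add: p_def det_pos_SPD SPD_add SPD_scaleR)
  have "(1/2) *\<^sub>R (2 *\<^sub>R A + 2 *\<^sub>R B) = A + B"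
    by (simp flip: scaleR_add_right)
  then have "stein_dist (2 *\<^sub>R A) (2 *\<^sub>R B) = sqrt (ln (det (A + B)) - ln p / 2)"
    by (simp add: stein_dist_def det_mul p_def)
  also have "\<dots> = sqrt (- ln (sqrt p / det (A + B)))"
    using pos by (simp add: ln_div ln_sqrt)
  also have "\<dots> = d_S (Phi A) (Phi B)"
    by (simp add: d_S_def p_def L2_inner_Phi_squared[OF assms])
  finally show ?thesis .
qed

end
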